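(* Fix integers $a,b\ge 2$ and $\varepsilon>0$. Let $n\to\infty$ and let $m=m(n)$ satisfy $m/n\to\infty$. Then all oriented hypergraphs $O\in\mathcal{O}(a,n,m)$, except for $o(|\mathcal{O}(a,n,m)|)$ of them, have the following property: for every coloring $C:[n]\to[b]$ and every $a$-tuple of colors $s=(s_1,\dots,s_a)\in[b]^a$, the number of hyperedges of $O$ whose color sequence with respect to $C$ is $s$ lies in the interval $\left[\left(\prod_{i=1}^a\frac{n_{s_i}^C}{n}-\varepsilon\right)m,\ \left(\prod_{i=1}^a\frac{n_{s_i}^C}{n}+\varepsilon\right)m\right]$.
   Context: An oriented $a$-uniform hypergraph on vertex set $[n]$ is a set of hyperedges, each an ordered sequence of $a$ distinct vertices, such that no two hyperedges consist of the same vertex set (i.e., an $a$-uniform hypergraph together with an independent total ordering of the vertices of each hyperedge). $\mathcal{O}(a,n,m)$ is the family of all oriented $a$-uniform hypergraphs on $[n]$ with exactly $m$ hyperedges. A coloring $C:[n]\to[b]$ is an arbitrary map; $n_j^C$ is the number of vertices of color $j$. The color sequence of a hyperedge $(v_1,\dots,v_a)$ is $(C(v_1),\dots,C(v_a))$. *)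

theory Defs
  imports Complex_Main "HOL-Library.Landau_Symbols"
begin

definition oriented_edges :: "nat \<Rightarrow> nat \<Rightarrow> nat list set" where
  "oriented_edges a n = {e. length e = a \<and> distinct e \<and> set e \<subseteq> {1..n}}"

definition oriented_hypergraphs :: "nat \<Rightarrow> nat \<Rightarrow> nat \<Rightarrow> nat list set set" where
  "oriented_hypergraphs a n m =
     {H. H \<subseteq> oriented_edges a n \<and> inj_on set H \<and> card H = m}"

definition color_count :: "nat \<Rightarrow> (nat \<Rightarrow> nat) \<Rightarrow> nat \<Rightarrow> nat" where
  "color_count n C j = card {v \<in> {1..n}. C v = j}"

definition edges_with_colors :: "nat list set \<Rightarrow> (nat \<Rightarrow> nat) \<Rightarrow> nat list \<Rightarrow> nat" where
  "edges_with_colors H C s = card {e \<in> H. map C e = s}"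

definition well_distributed ::
  "nat \<Rightarrow> nat \<Rightarrow> nat \<Rightarrow> nat \<Rightarrow> real \<Rightarrow> nat list set \<Rightarrow> bool" where
  "well_distributed a b n m \<epsilon> H \<longleftrightarrow>
    (\<forall>C. (\<forall>v\<in>{1..n}. C v \<in> {1..b}) \<longrightarrow>
      (\<forall>s. length s = a \<and> set s \<subseteq> {1..b} \<longrightarrow>
         (let p = (\<Prod>i<a. real (color_count n C (s ! i)) / real n) in
           (p - \<epsilon>) * real m \<le> real (edges_with_colors H C s) \<and>
           real (edges_with_colors H C s) \<le> (p + \<epsilon>) * real m)))"

end

theory Submission
  imports Defs "HOL-Combinatorics.Multiset_Permutations" "HOL-Library.FuncSet"
    "HOL-Real_Asymp.Real_Asymp"
begin

text \<open>
  An oriented hypergraph with m hyperedges is a choice of m distinct a-sets of [n] together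
  with one of the a! orientations of each, i.e. a transversal of size m of the fibres of the
  map e \<mapsto> set e on oriented edges.  Fix a colouring C and a colour sequence s, and let q
  be the fraction of oriented edges with colour sequence s; q differs from the product of the
  colour densities n_(s_i)/n by O(1/n).  Giving weight l = 1 + \<delta>/4 to every
  such edge, Maclaurin's inequality for elementary symmetric means of the fibre weights bounds
  the average of l^(number of hits) over all transversals by (1 + (l - 1) q)^m, and Markov's
  inequality turns this into the tail bound exp (-\<delta>^2 m / 8) for more than
  (q + \<delta>) m hits; the complementary colour class gives the lower tail.  A union bound
  over the b^n colourings and b^a colour sequences costs a factor b^(n+a), which is
  negligible because m/n \<rightarrow> \<infinity>.
\<close>

section \<open>Transversals of the fibres of a map\<close>

definition transversals :: "'e set \<Rightarrow> ('e \<Rightarrow> 'k) \<Rightarrow> nat \<Rightarrow> 'e set set" where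
  "transversals V \<kappa> m = {H. H \<subseteq> V \<and> inj_on \<kappa> H \<and> card H = m}"

lemma finite_transversals: "finite V \<Longrightarrow> finite (transversals V \<kappa> m)"
  unfolding transversals_def by (rule finite_subset[of _ "Pow V"]) auto

lemma transversals_0: "finite V \<Longrightarrow> transversals V \<kappa> 0 = {{}}"
  unfolding transversals_def by (auto dest: finite_subset)

lemma transversals_empty_Suc: "transversals {} \<kappa> (Suc m) = {}"
  unfolding transversals_def by auto

lemma transversals_add_fibre:
  assumes fin: "finite V" and x: "\<forall>e\<in>V. \<kappa> e \<noteq> x"
  shows "transversals (V \<union> {e\<in>V'. \<kappa> e = x}) \<kappa> (Suc m) =
     transversals V \<kappa> (Suc m) \<union> (\<Union>e\<in>{e\<in>V'. \<kappa> e = x}. insert e ` transversals V \<kappa> m)"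
proof (intro equalityI subsetI)
  fix H assume H: "H \<in> transversals (V \<union> {e\<in>V'. \<kappa> e = x}) \<kappa> (Suc m)"
  show "H \<in> transversals V \<kappa> (Suc m) \<union> (\<Union>e\<in>{e\<in>V'. \<kappa> e = x}. insert e ` transversals V \<kappa> m)"
  proof (cases "\<exists>e\<in>H. \<kappa> e = x")
    case False
    then show ?thesis using H unfolding transversals_def by auto
  next
    case True
    then obtain e where e: "e \<in> H" "\<kappa> e = x" by blast
    have "finite H" using H card_ge_0_finite unfolding transversals_def by force
    moreover have "H - {e} \<subseteq> V" using H e unfolding transversals_def inj_on_def by auto
    moreover have "e \<in> V'" using e H x unfolding transversals_def by auto
    moreover have "H = insert e (H - {e})" using e by auto
    ultimately show ?thesis using H e unfolding transversals_def
      by (auto intro!: bexI[of _ e] image_eqI[of _ _ "H - {e}"] inj_on_subset[of _ H])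
  qed
next
  fix H assume "H \<in> transversals V \<kappa> (Suc m) \<union> (\<Union>e\<in>{e\<in>V'. \<kappa> e = x}. insert e ` transversals V \<kappa> m)"
  then show "H \<in> transversals (V \<union> {e\<in>V'. \<kappa> e = x}) \<kappa> (Suc m)"
  proof
    assume "H \<in> transversals V \<kappa> (Suc m)"
    then show ?thesis unfolding transversals_def by auto
  next
    assume "H \<in> (\<Union>e\<in>{e\<in>V'. \<kappa> e = x}. insert e ` transversals V \<kappa> m)"
    then obtain e G where e: "e \<in> V'" "\<kappa> e = x" and G: "G \<in> transversals V \<kappa> m"
      and HG: "H = insert e G" by auto
    have "finite G" using G fin unfolding transversals_def by (auto dest: finite_subset)
    moreover have "e \<notin> G" "x \<notin> \<kappa> ` G" using G x e unfolding transversals_def by auto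
    ultimately show ?thesis using G e HG unfolding transversals_def by auto
  qed
qed

lemma sum_prod_transversals_add_fibre:
  fixes \<phi> :: "'e \<Rightarrow> real"
  assumes fin: "finite V" "finite V'" and x: "\<forall>e\<in>V. \<kappa> e \<noteq> x"
  shows "(\<Sum>H\<in>transversals (V \<union> {e\<in>V'. \<kappa> e = x}) \<kappa> (Suc m). \<Prod>e\<in>H. \<phi> e) =
     (\<Sum>H\<in>transversals V \<kappa> (Suc m). \<Prod>e\<in>H. \<phi> e)
     + (\<Sum>e\<in>{e\<in>V'. \<kappa> e = x}. \<phi> e) * (\<Sum>H\<in>transversals V \<kappa> m. \<Prod>e\<in>H. \<phi> e)"
proof -
  let ?X = "{e\<in>V'. \<kappa> e = x}"
  let ?T = "transversals V \<kappa>"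
  have fX: "finite ?X" using fin by auto
  have fT: "finite (?T k)" for k using finite_transversals[OF fin(1)] .
  have disj: "?T (Suc m) \<inter> (\<Union>e\<in>?X. insert e ` ?T m) = {}"
    using x unfolding transversals_def by auto
  have union: "(\<Sum>H\<in>(\<Union>e\<in>?X. insert e ` ?T m). \<Prod>e\<in>H. \<phi> e) =
       (\<Sum>e\<in>?X. \<Sum>H\<in>insert e ` ?T m. \<Prod>e\<in>H. \<phi> e)"
    using fT x by (intro sum.UNION_disjoint[OF fX]) (auto simp: transversals_def)
  have insert: "(\<Sum>H\<in>insert e ` ?T m. \<Prod>e\<in>H. \<phi> e) = \<phi> e * (\<Sum>H\<in>?T m. \<Prod>e\<in>H. \<phi> e)"
    if "e \<in> ?X" for e
  proof -
    have eV: "e \<notin> V" using that x by auto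
    have "inj_on (insert e) (?T m)"
      unfolding inj_on_def transversals_def using eV by auto
    then have "(\<Sum>H\<in>insert e ` ?T m. \<Prod>e\<in>H. \<phi> e) = (\<Sum>H\<in>?T m. \<Prod>e\<in>insert e H. \<phi> e)"
      by (simp add: sum.reindex)
    also have "\<dots> = (\<Sum>H\<in>?T m. \<phi> e * (\<Prod>e\<in>H. \<phi> e))"
      using fin eV by (intro sum.cong refl prod.insert) (auto simp: transversals_def dest: finite_subset)
    finally show ?thesis by (simp add: sum_distrib_left)
  qed
  show ?thesis
    using fT fX by (simp add: transversals_add_fibre[OF fin(1) x] sum.union_disjoint[OF _ _ disj]
        union insert sum_distrib_right)
qed

lemma card_transversals:
  assumes V: "finite V" and W: "finite W" and c: "\<forall>x\<in>W. card {e\<in>V. \<kappa> e = x} = c"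
  shows "card (transversals {e\<in>V. \<kappa> e \<in> W} \<kappa> m) = (card W choose m) * c ^ m"
  using W c
proof (induction W arbitrary: m rule: finite_induct)
  case empty
  then show ?case by (cases m) (auto simp: transversals_0 transversals_empty_Suc)
next
  case (insert x W)
  let ?VW = "{e\<in>V. \<kappa> e \<in> W}"
  have split: "{e\<in>V. \<kappa> e \<in> insert x W} = ?VW \<union> {e\<in>V. \<kappa> e = x}" by auto
  have xW: "\<forall>e\<in>?VW. \<kappa> e \<noteq> x" using insert.hyps by auto
  show ?case
  proof (cases m)
    case 0
    then show ?thesis using V by (simp add: transversals_0)
  next
    case (Suc k)
    have "real (card (transversals {e\<in>V. \<kappa> e \<in> insert x W} \<kappa> m))
       = (\<Sum>H\<in>transversals {e\<in>V. \<kappa> e \<in> insert x W} \<kappa> m. \<Prod>e\<in>H. (1::real))" by simp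
    also have "\<dots> = (\<Sum>H\<in>transversals ?VW \<kappa> (Suc k). \<Prod>e\<in>H. (1::real))
         + (\<Sum>e\<in>{e\<in>V. \<kappa> e = x}. (1::real)) * (\<Sum>H\<in>transversals ?VW \<kappa> k. \<Prod>e\<in>H. (1::real))"
      unfolding split Suc using V xW by (intro sum_prod_transversals_add_fibre) auto
    also have "\<dots> = real ((card W choose Suc k) * c ^ Suc k + c * ((card W choose k) * c ^ k))"
      using insert.IH insert.prems by simp
    also have "\<dots> = real ((card (insert x W) choose m) * c ^ m)"
      using insert.hyps by (simp add: Suc algebra_simps)
    finally show ?thesis by (simp only: of_nat_eq_iff)
  qed
qed

section \<open>Maclaurin's inequality for transversals\<close>

lemma amgm_power_Suc:
  fixes x \<mu> :: real
  assumes "x \<ge> 0" "\<mu> \<ge> 0"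
  shows "x ^ m * ((m + 1) * \<mu> - m * x) \<le> \<mu> ^ (m + 1)"
proof (induction m)
  case 0
  then show ?case by simp
next
  case (Suc m)
  have "x ^ Suc m * ((Suc m + 1) * \<mu> - Suc m * x) - \<mu> * (x ^ m * ((m + 1) * \<mu> - m * x))
        = - (x ^ m * ((m + 1) * (\<mu> - x)\<^sup>2))"
    by (simp add: algebra_simps power2_eq_square)
  moreover have "x ^ m * ((m + 1) * (\<mu> - x)\<^sup>2) \<ge> 0" using assms by simp
  moreover have "\<mu> * (x ^ m * ((m + 1) * \<mu> - m * x)) \<le> \<mu> * \<mu> ^ (m + 1)"
    using mult_left_mono[OF Suc.IH assms(2)] by (simp add: add.commute)
  ultimately show ?case by simp
qed

text \<open>
  The induction step of Maclaurin's inequality: adding a fibre of total weight w to M fibres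
  of total weight S keeps the elementary symmetric function below the binomial bound.
\<close>
lemma binomial_mean_power_step:
  fixes S w :: real and M m :: nat
  assumes S: "S \<ge> 0" and w: "w \<ge> 0" and M0: "M = 0 \<Longrightarrow> S = 0"
  shows "real (M choose Suc m) * (S / M) ^ Suc m + w * (real (M choose m) * (S / M) ^ m)
         \<le> real (Suc M choose Suc m) * ((S + w) / Suc M) ^ Suc m"
proof (cases "M = 0")
  case True
  then show ?thesis using M0 w by (cases m) auto
next
  case False
  define x where "x = S / M"
  define \<mu> where "\<mu> = (S + w) / Suc M"
  have x0: "x \<ge> 0" and \<mu>0: "\<mu> \<ge> 0" using S w by (auto simp: x_def \<mu>_def)
  have w_eq: "w = (M + 1) * \<mu> - M * x" using False by (simp add: x_def \<mu>_def field_simps)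
  have absorb: "real (M choose Suc m) * (m + 1) = real (M choose m) * (real M - m)"
  proof (cases "m \<le> M")
    case True
    have "(M choose Suc m) * Suc m = (M choose m) * (M - m)"
      by (metis binomial_absorb_comp binomial_absorption mult.commute)
    then have "real ((M choose Suc m) * Suc m) = real ((M choose m) * (M - m))" by simp
    then show ?thesis using True by (simp add: of_nat_diff algebra_simps)
  next
    case False
    then show ?thesis by (simp add: binomial_eq_0)
  qed
  have pascal: "real (Suc M choose Suc m) * (m + 1) = real (M choose m) * (M + 1)"
  proof -
    have "real (Suc M * (M choose m)) = real (Suc m * (Suc M choose Suc m))"
      by (simp only: Suc_times_binomial)
    then show ?thesis by (simp add: algebra_simps)
  qed
  have "(real (M choose Suc m) * x ^ Suc m + w * (real (M choose m) * x ^ m)) * (m + 1)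
        = real (M choose Suc m) * (m + 1) * x ^ Suc m + w * (real (M choose m) * x ^ m) * (m + 1)"
    by (simp add: algebra_simps)
  also have "\<dots> = real (M choose m) * ((M + 1) * (x ^ m * ((m + 1) * \<mu> - m * x)))"
    unfolding absorb w_eq by (simp add: algebra_simps)
  also have "\<dots> \<le> real (M choose m) * ((M + 1) * \<mu> ^ (m + 1))"
    using amgm_power_Suc[OF x0 \<mu>0, of m] by (intro mult_left_mono) (auto simp: add.commute)
  also have "\<dots> = real (M choose m) * (M + 1) * \<mu> ^ Suc m"
    by (simp add: algebra_simps)
  also have "\<dots> = real (Suc M choose Suc m) * \<mu> ^ Suc m * (m + 1)"
    using pascal by (metis mult.commute mult.left_commute)
  finally show ?thesis unfolding x_def[symmetric] \<mu>_def[symmetric] by (simp del: of_nat_Suc)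
qed

lemma sum_prod_transversals_le:
  fixes \<phi> :: "'e \<Rightarrow> real"
  assumes V: "finite V" and \<phi>: "\<forall>e\<in>V. \<phi> e \<ge> 0" and W: "finite W"
  shows "(\<Sum>H\<in>transversals {e\<in>V. \<kappa> e \<in> W} \<kappa> m. \<Prod>e\<in>H. \<phi> e)
     \<le> real (card W choose m) * ((\<Sum>e\<in>{e\<in>V. \<kappa> e \<in> W}. \<phi> e) / card W) ^ m"
  using W
proof (induction W arbitrary: m rule: finite_induct)
  case empty
  then show ?case by (cases m) (auto simp: transversals_0 transversals_empty_Suc)
next
  case (insert x W)
  let ?VW = "{e\<in>V. \<kappa> e \<in> W}"
  let ?X = "{e\<in>V. \<kappa> e = x}"
  define S where "S = (\<Sum>e\<in>?VW. \<phi> e)"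
  define w where "w = (\<Sum>e\<in>?X. \<phi> e)"
  have split: "{e\<in>V. \<kappa> e \<in> insert x W} = ?VW \<union> ?X" by auto
  have S0: "S \<ge> 0" and w0: "w \<ge> 0" unfolding S_def w_def using \<phi> by (auto intro: sum_nonneg)
  have sum_split: "(\<Sum>e\<in>{e\<in>V. \<kappa> e \<in> insert x W}. \<phi> e) = S + w"
    unfolding split S_def w_def by (rule sum.union_disjoint) (use V insert.hyps in auto)
  have card_insert: "card (insert x W) = Suc (card W)" using insert.hyps by simp
  show ?case
  proof (cases m)
    case 0
    then show ?thesis using V by (simp add: transversals_0)
  next
    case (Suc k)
    have "(\<Sum>H\<in>transversals {e\<in>V. \<kappa> e \<in> insert x W} \<kappa> m. \<Prod>e\<in>H. \<phi> e)
        = (\<Sum>H\<in>transversals ?VW \<kappa> (Suc k). \<Prod>e\<in>H. \<phi> e)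
          + w * (\<Sum>H\<in>transversals ?VW \<kappa> k. \<Prod>e\<in>H. \<phi> e)"
      unfolding split Suc w_def using V insert.hyps by (intro sum_prod_transversals_add_fibre) auto
    also have "\<dots> \<le> real (card W choose Suc k) * (S / card W) ^ Suc k
                    + w * (real (card W choose k) * (S / card W) ^ k)"
      unfolding S_def using insert.IH[of "Suc k"] insert.IH[of k] w0
      by (intro add_mono mult_left_mono) (simp_all del: power_Suc)
    also have "\<dots> \<le> real (Suc (card W) choose Suc k) * ((S + w) / Suc (card W)) ^ Suc k"
      using insert.hyps(1) by (intro binomial_mean_power_step S0 w0) (simp add: S_def)
    finally show ?thesis unfolding Suc sum_split card_insert .
  qed
qed

section \<open>A Chernoff bound for transversals\<close>

lemma prod_indicator_weight:
  assumes "finite H"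
  shows "(\<Prod>e\<in>H. if e \<in> G then (l::real) else 1) = l ^ card (H \<inter> G)"
  using assms by (simp add: prod.If_cases)

lemma sum_weight_transversals_le:
  fixes l :: real
  assumes V: "finite V" and G: "G \<subseteq> V" and c: "\<forall>x\<in>\<kappa>`V. card {e\<in>V. \<kappa> e = x} = c"
    and l: "l \<ge> 0"
  shows "(\<Sum>H\<in>transversals V \<kappa> m. l ^ card (H \<inter> G))
         \<le> card (transversals V \<kappa> m) * (1 + (l - 1) * (card G / card V)) ^ m"
proof (cases "V = {}")
  case True
  then show ?thesis by (cases m) (auto simp: transversals_0 transversals_empty_Suc)
next
  case False
  define \<phi> where "\<phi> e = (if e \<in> G then l else 1)" for e
  have VV: "{e\<in>V. \<kappa> e \<in> \<kappa> ` V} = V" by auto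
  have fW: "finite (\<kappa> ` V)" using V by simp
  have N0: "card (\<kappa> ` V) > 0" using fW False by auto
  have card_V: "card V = c * card (\<kappa> ` V)"
  proof -
    have "card V = (\<Sum>x\<in>\<kappa>`V. card {e\<in>V. \<kappa> e = x})"
      using card_eq_sum sum.image_gen[OF V, of "\<lambda>_. 1::nat" \<kappa>] by simp
    then show ?thesis using c by simp
  qed
  have c0: "c \<noteq> 0" using card_V False V by auto
  have sum_\<phi>: "(\<Sum>e\<in>V. \<phi> e) = card V + (l - 1) * card G"
  proof -
    have "(\<Sum>e\<in>V. \<phi> e) = (\<Sum>e\<in>V. 1 + (if e \<in> G then l - 1 else 0))"
      by (intro sum.cong) (auto simp: \<phi>_def)
    then show ?thesis using G V by (simp add: sum.distrib sum.If_cases Int_absorb1)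
  qed
  have "(\<Sum>H\<in>transversals V \<kappa> m. l ^ card (H \<inter> G)) = (\<Sum>H\<in>transversals V \<kappa> m. \<Prod>e\<in>H. \<phi> e)"
    using V unfolding \<phi>_def
    by (intro sum.cong refl prod_indicator_weight[symmetric]) (auto simp: transversals_def dest: finite_subset)
  also have "\<dots> \<le> real (card (\<kappa>`V) choose m) * ((\<Sum>e\<in>V. \<phi> e) / card (\<kappa>`V)) ^ m"
    using sum_prod_transversals_le[OF V _ fW, of \<phi> \<kappa> m] l unfolding VV by (auto simp: \<phi>_def)
  also have "(\<Sum>e\<in>V. \<phi> e) / card (\<kappa>`V) = c * (1 + (l - 1) * (card G / card V))"
    using N0 card_V c0 unfolding sum_\<phi> by (simp add: field_simps)
  also have "real (card (\<kappa>`V) choose m) = card (transversals V \<kappa> m) / c ^ m"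
    using card_transversals[OF V fW c, of m] c0 unfolding VV by simp
  finally show ?thesis using c0 by (simp add: power_mult_distrib)
qed

lemma moment_le_exp_powr:
  fixes q \<delta> :: real
  assumes q: "0 \<le> q" "q \<le> 1" and \<delta>: "0 < \<delta>" "\<delta> \<le> 1"
  shows "(1 + \<delta>/4 * q) ^ m \<le> exp (- (\<delta>\<^sup>2 / 8) * m) * (1 + \<delta>/4) powr ((q + \<delta>) * m)"
proof -
  define t where "t = \<delta> / 4"
  have t: "0 \<le> t" "t \<le> 1" using \<delta> by (auto simp: t_def)
  have "ln (1 + t * q) \<le> t * q" using t q by (intro ln_add_one_self_le_self) auto
  moreover have "(q + \<delta>) * (t - t\<^sup>2) \<le> (q + \<delta>) * ln (1 + t)"
    using t q \<delta> by (intro mult_left_mono ln_one_plus_pos_lower_bound) auto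
  moreover have "(q + \<delta>) * t\<^sup>2 \<le> 2 * t\<^sup>2" using q \<delta> by (intro mult_right_mono) auto
  moreover have "t * q - (q + \<delta>) * t + 2 * t\<^sup>2 = - (\<delta>\<^sup>2 / 8)"
    by (simp add: t_def power2_eq_square field_simps)
  ultimately have "ln (1 + t * q) \<le> - (\<delta>\<^sup>2 / 8) + (q + \<delta>) * ln (1 + t)"
    by (simp add: algebra_simps)
  then have mono: "m * ln (1 + t * q) \<le> m * (- (\<delta>\<^sup>2 / 8) + (q + \<delta>) * ln (1 + t))"
    by (rule mult_left_mono) simp
  have "0 < 1 + t * q" using t q by (simp add: add_pos_nonneg)
  then have "(1 + t * q) ^ m = exp (m * ln (1 + t * q))" by (simp add: exp_of_nat_mult)
  also have "\<dots> \<le> exp (m * (- (\<delta>\<^sup>2 / 8) + (q + \<delta>) * ln (1 + t)))"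
    using mono by simp
  also have "\<dots> = exp (- (\<delta>\<^sup>2 / 8) * m) * (1 + t) powr ((q + \<delta>) * m)"
    using t by (simp add: powr_def algebra_simps flip: exp_add)
  finally show ?thesis by (simp add: t_def)
qed

lemma card_transversals_upper_tail:
  fixes \<delta> :: real
  assumes V: "finite V" and G: "G \<subseteq> V" and c: "\<forall>x\<in>\<kappa>`V. card {e\<in>V. \<kappa> e = x} = c"
    and \<delta>: "0 < \<delta>" "\<delta> \<le> 1"
  shows "real (card {H\<in>transversals V \<kappa> m. real (card (H \<inter> G)) \<ge> (card G / card V + \<delta>) * m})
         \<le> exp (- (\<delta>\<^sup>2 / 8) * m) * card (transversals V \<kappa> m)"
proof -
  define q where "q = card G / card V"
  define l where "l = 1 + \<delta>/4"
  define Bad where "Bad = {H\<in>transversals V \<kappa> m. real (card (H \<inter> G)) \<ge> (q + \<delta>) * m}"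
  have l: "l \<ge> 1" using \<delta> by (simp add: l_def)
  have q: "0 \<le> q" "q \<le> 1" using G V by (auto simp: q_def card_mono divide_le_eq_1)
  have markov: "l powr ((q + \<delta>) * m) \<le> l ^ card (H \<inter> G)" if "H \<in> Bad" for H
  proof -
    have "l powr ((q + \<delta>) * m) \<le> l powr (card (H \<inter> G))"
      using that l unfolding Bad_def by (intro powr_mono) auto
    then show ?thesis using l by (simp add: powr_realpow)
  qed
  have "real (card Bad) * l powr ((q + \<delta>) * m) \<le> (\<Sum>H\<in>Bad. l ^ card (H \<inter> G))"
    using sum_mono[OF markov] by simp
  also have "\<dots> \<le> (\<Sum>H\<in>transversals V \<kappa> m. l ^ card (H \<inter> G))"
    using finite_transversals[OF V] l by (intro sum_mono2) (auto simp: Bad_def)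
  also have "\<dots> \<le> card (transversals V \<kappa> m) * (1 + \<delta>/4 * q) ^ m"
    using sum_weight_transversals_le[OF V G c, of l m] l by (simp add: l_def q_def)
  also have "\<dots> \<le> card (transversals V \<kappa> m) * (exp (- (\<delta>\<^sup>2 / 8) * m) * l powr ((q + \<delta>) * m))"
    unfolding l_def by (intro mult_left_mono moment_le_exp_powr q \<delta>) auto
  finally show ?thesis
    using l unfolding Bad_def q_def by (simp add: mult.commute mult.left_commute)
qed

section \<open>Oriented hypergraphs as transversals\<close>

lemma oriented_hypergraphs_eq_transversals:
  "oriented_hypergraphs a n m = transversals (oriented_edges a n) set m"
  unfolding oriented_hypergraphs_def transversals_def by simp

lemma finite_oriented_edges: "finite (oriented_edges a n)"
proof (rule finite_subset)
  show "oriented_edges a n \<subseteq> {xs. set xs \<subseteq> {1..n} \<and> length xs = a}"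
    unfolding oriented_edges_def by auto
qed (simp add: finite_lists_length_eq)

lemma oriented_edges_nonempty: "a \<le> n \<Longrightarrow> oriented_edges a n \<noteq> {}"
  using oriented_edges_def by (auto intro!: exI[of _ "[1..<Suc a]"])

lemma card_oriented_edges_fibre:
  assumes "x \<in> set ` oriented_edges a n"
  shows "card {e \<in> oriented_edges a n. set e = x} = fact a"
proof -
  obtain e0 where e0: "e0 \<in> oriented_edges a n" "x = set e0" using assms by auto
  have cx: "card x = a" using e0 distinct_card unfolding oriented_edges_def by fastforce
  have "x \<subseteq> {1..n}" using e0 unfolding oriented_edges_def by auto
  then have "{e \<in> oriented_edges a n. set e = x} = permutations_of_set x"
    using cx unfolding oriented_edges_def permutations_of_set_def by (auto simp: distinct_card)
  then show ?thesis using cx e0 by simp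
qed

lemma card_oriented_edges_ge:
  assumes "a \<le> n"
  shows "(real n - real a + 1) ^ a \<le> real (card (oriented_edges a n))"
proof -
  have "card (oriented_edges a n) = \<Prod>{n - a + 1..n}"
    using card_lists_distinct_length_eq[of "{1..n}" a] assms
    unfolding oriented_edges_def by (simp add: conj_commute)
  moreover have "(n - a + 1) ^ a \<le> \<Prod>{n - a + 1..n}"
    using prod_mono[of "{n - a + 1..n}" "\<lambda>_. n - a + 1" id] assms by simp
  ultimately have "real ((n - a + 1) ^ a) \<le> real (card (oriented_edges a n))"
    by (simp only: of_nat_le_iff)
  then show ?thesis using assms by (simp add: of_nat_diff add.commute)
qed

lemma eventually_power_div_card_oriented_edges_le:
  assumes "\<epsilon> > 0"
  shows "eventually (\<lambda>n. real n ^ a / real (card (oriented_edges a n)) \<le> 1 + \<epsilon>) sequentially"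
proof -
  have "((\<lambda>n. (real n / (real n - real a + 1)) ^ a) \<longlongrightarrow> 1) sequentially"
    by real_asymp
  then have "eventually (\<lambda>n. (real n / (real n - real a + 1)) ^ a < 1 + \<epsilon>) sequentially"
    using assms by (intro order_tendstoD) auto
  with eventually_ge_at_top[of a] show ?thesis
  proof eventually_elim
    case (elim n)
    then have "0 < (real n - real a + 1) ^ a" by simp
    then have "real n ^ a / real (card (oriented_edges a n)) \<le> real n ^ a / (real n - real a + 1) ^ a"
      using card_oriented_edges_ge[OF elim(1)] by (intro divide_left_mono) auto
    then show ?case using elim(2) by (simp add: power_divide)
  qed
qed

lemma card_lists_with_colors:
  assumes "finite X"
  shows "card {e. set e \<subseteq> X \<and> map C e = s} = (\<Prod>i<length s. card {v\<in>X. C v = s ! i})"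
proof (induction s)
  case Nil
  have "{e. set e \<subseteq> X \<and> map C e = []} = {[]}" by auto
  then show ?case by simp
next
  case (Cons c s)
  have eq: "{e. set e \<subseteq> X \<and> map C e = c # s} =
      (\<lambda>(v, e). v # e) ` ({v\<in>X. C v = c} \<times> {e. set e \<subseteq> X \<and> map C e = s})"
    by (auto simp: Cons_eq_map_conv)
  have inj: "inj_on (\<lambda>(v, e). v # e) X'" for X' :: "('a \<times> 'a list) set"
    by (rule inj_onI) auto
  show ?case unfolding eq card_image[OF inj] card_cartesian_product Cons.IH
    by (simp only: length_Cons prod.lessThan_Suc_shift nth_Cons_0 nth_Cons_Suc)
qed

lemma abs_ratio_diff_le:
  fixes A g N D :: real
  assumes "0 \<le> g" "g \<le> A" "A - g \<le> N - D" "g \<le> D" "A \<le> N" "D \<le> N" "0 < D"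
  shows "\<bar>A / N - g / D\<bar> \<le> N / D - 1"
proof -
  have N: "N > 0" using assms by linarith
  have "g / D - A / N \<le> A / D - A / N" using assms by (simp add: divide_right_mono)
  also have "\<dots> = A * (N - D) / (D * N)" using N assms by (simp add: field_simps)
  also have "\<dots> \<le> N * (N - D) / (D * N)"
    using assms N by (intro divide_right_mono mult_right_mono) auto
  also have "\<dots> = (N - D) / D" using N by simp
  finally have below: "g / D - A / N \<le> (N - D) / D" .
  have "A / N - g / D \<le> (A - g) / N" using assms N by (simp add: frac_le diff_divide_distrib)
  also have "\<dots> \<le> (N - D) / N" using assms N by (simp add: divide_right_mono)
  also have "\<dots> \<le> (N - D) / D" using assms by (intro divide_left_mono) auto
  finally have above: "A / N - g / D \<le> (N - D) / D" .
  have "(N - D) / D = N / D - 1" using assms by (simp add: field_simps)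
  then show ?thesis using below above by linarith
qed

text \<open>
  Of the n^a lists of length a over [n], exactly the product of the n_(s_i) have colour
  sequence s; only the few lists with a repeated vertex are not oriented edges.
\<close>
lemma color_density_close:
  assumes "a \<le> n" and s: "length s = a"
  shows "\<bar>(\<Prod>i<a. real (color_count n C (s ! i)) / real n)
          - real (card {e\<in>oriented_edges a n. map C e = s}) / real (card (oriented_edges a n))\<bar>
         \<le> real n ^ a / real (card (oriented_edges a n)) - 1"
proof -
  define V where "V = oriented_edges a n"
  define G where "G = {e\<in>V. map C e = s}"
  define A where "A = {e. set e \<subseteq> {1..n} \<and> map C e = s}"
  define L where "L = {e. set e \<subseteq> {1..n} \<and> length e = a}"
  have fL: "finite L" unfolding L_def by (simp add: finite_lists_length_eq)
  have card_L: "card L = n ^ a" unfolding L_def by (simp add: card_lists_length_eq)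
  have AL: "A \<subseteq> L" unfolding A_def L_def using s by auto
  have VL: "V \<subseteq> L" unfolding V_def L_def oriented_edges_def by auto
  have GA: "G \<subseteq> A" unfolding G_def A_def V_def oriented_edges_def by auto
  have GV: "G \<subseteq> V" unfolding G_def by auto
  have AGLV: "A - G \<subseteq> L - V" unfolding A_def G_def L_def V_def oriented_edges_def using s by auto
  have fA: "finite A" using AL fL by (rule finite_subset)
  have fV: "finite V" using VL fL by (rule finite_subset)
  have fG: "finite G" using GV fV by (rule finite_subset)
  have card_A: "card A = (\<Prod>i<a. color_count n C (s ! i))"
    unfolding A_def color_count_def using card_lists_with_colors[of "{1..n}" C s] s by simp
  have V0: "card V > 0" using fV oriented_edges_nonempty[OF assms(1)] by (simp add: V_def card_gt_0_iff)
  have le: "card G \<le> card A" "card G \<le> card V" "card A \<le> card L" "card V \<le> card L"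
    using card_mono[OF fA GA] card_mono[OF fV GV] card_mono[OF fL AL] card_mono[OF fL VL] by auto
  have "card (A - G) \<le> card (L - V)" using fL AGLV by (intro card_mono) auto
  then have "real (card A) - real (card G) \<le> real (card L) - real (card V)"
    using card_Diff_subset[OF fG GA] card_Diff_subset[OF fV VL] le by (simp add: of_nat_diff)
  moreover have "(\<Prod>i<a. real (color_count n C (s ! i)) / real n) = real (card A) / real (card L)"
    unfolding card_A card_L by (simp add: prod_dividef)
  ultimately show ?thesis
    using abs_ratio_diff_le[of "real (card G)" "real (card A)" "real (card L)" "real (card V)"] le V0
    unfolding G_def V_def card_L by simp
qed

section \<open>The union bound\<close>

lemma card_deviating_hypergraphs_le:
  fixes C :: "nat \<Rightarrow> nat" and s :: "nat list"
  assumes "a \<le> n" and \<delta>: "0 < \<delta>" "\<delta> \<le> 1"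
  defines "q \<equiv> real (card {e\<in>oriented_edges a n. map C e = s}) / real (card (oriented_edges a n))"
  shows "real (card {H \<in> oriented_hypergraphs a n m.
            \<delta> * m < \<bar>real (edges_with_colors H C s) - q * m\<bar>})
         \<le> 2 * exp (- (\<delta>\<^sup>2 / 8) * m) * card (oriented_hypergraphs a n m)"
proof -
  define V where "V = oriented_edges a n"
  define G where "G = {e\<in>V. map C e = s}"
  define F where "F = transversals V set m"
  define Hi where "Hi X = {H\<in>F. real (card (H \<inter> X)) \<ge> (card X / card V + \<delta>) * m}" for X
  have fV: "finite V" unfolding V_def by (rule finite_oriented_edges)
  have GV: "G \<subseteq> V" unfolding G_def by auto
  have fG: "finite G" using GV fV finite_subset by blast
  have V0: "card V > 0" using fV oriented_edges_nonempty[OF assms(1)] by (simp add: V_def card_gt_0_iff)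
  have q_G: "q = real (card G) / real (card V)" unfolding q_def G_def V_def ..
  have card_VG: "real (card (V - G)) / real (card V) = 1 - q"
    using card_Diff_subset[OF fG GV] card_mono[OF fV GV] V0 unfolding q_G
    by (simp add: of_nat_diff field_simps)
  have sub: "{H \<in> oriented_hypergraphs a n m. \<delta> * m < \<bar>real (edges_with_colors H C s) - q * m\<bar>}
        \<subseteq> Hi G \<union> Hi (V - G)"
  proof
    fix H assume "H \<in> {H \<in> oriented_hypergraphs a n m. \<delta> * m < \<bar>real (edges_with_colors H C s) - q * m\<bar>}"
    then have HF: "H \<in> F" and dev: "\<delta> * m < \<bar>real (edges_with_colors H C s) - q * m\<bar>"
      unfolding oriented_hypergraphs_eq_transversals F_def V_def by auto
    have HV: "H \<subseteq> V" and card_H: "card H = m" using HF unfolding F_def transversals_def by auto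
    have fH: "finite H" using HV fV finite_subset by blast
    have hits: "edges_with_colors H C s = card (H \<inter> G)"
      unfolding edges_with_colors_def G_def using HV by (intro arg_cong[where f=card]) auto
    have "H \<inter> (V - G) = H - (H \<inter> G)" using HV by auto
    then have misses: "card (H \<inter> (V - G)) = m - card (H \<inter> G)"
      using card_Diff_subset[of "H \<inter> G" H] fH card_H by auto
    have le: "card (H \<inter> G) \<le> m" using card_H fH by (metis Int_lower1 card_mono)
    show "H \<in> Hi G \<union> Hi (V - G)"
    proof (cases "q * m \<le> card (H \<inter> G)")
      case True
      then have "(q + \<delta>) * m \<le> card (H \<inter> G)" using dev unfolding hits by (simp add: algebra_simps)
      then show ?thesis using HF unfolding Hi_def q_G by auto
    next
      case False
      then have "(1 - q + \<delta>) * m \<le> real m - card (H \<inter> G)"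
        using dev unfolding hits by (simp add: algebra_simps)
      then have "(card (V - G) / card V + \<delta>) * m \<le> card (H \<inter> (V - G))"
        unfolding misses card_VG using le by (simp add: of_nat_diff)
      then show ?thesis using HF unfolding Hi_def by auto
    qed
  qed
  have fibre: "\<forall>x\<in>set ` V. card {e\<in>V. set e = x} = fact a"
    unfolding V_def using card_oriented_edges_fibre by blast
  have tail: "real (card (Hi X)) \<le> exp (- (\<delta>\<^sup>2 / 8) * m) * card F" if "X \<subseteq> V" for X
    unfolding Hi_def F_def by (rule card_transversals_upper_tail[OF fV that fibre \<delta>])
  have "finite (Hi X)" for X
    unfolding Hi_def F_def using finite_transversals[OF fV] by (rule finite_subset[rotated]) auto
  then have "card {H \<in> oriented_hypergraphs a n m. \<delta> * m < \<bar>real (edges_with_colors H C s) - q * m\<bar>}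
        \<le> card (Hi G \<union> Hi (V - G))"
    using sub by (intro card_mono) auto
  also have "\<dots> \<le> card (Hi G) + card (Hi (V - G))" by (rule card_Un_le)
  finally have "real (card {H \<in> oriented_hypergraphs a n m.
      \<delta> * m < \<bar>real (edges_with_colors H C s) - q * m\<bar>}) \<le> real (card (Hi G)) + real (card (Hi (V - G)))"
    by (simp only: of_nat_add[symmetric] of_nat_le_iff)
  also have "\<dots> \<le> exp (- (\<delta>\<^sup>2 / 8) * m) * card F + exp (- (\<delta>\<^sup>2 / 8) * m) * card F"
    using GV by (intro add_mono tail) auto
  finally show ?thesis unfolding F_def V_def oriented_hypergraphs_eq_transversals by (simp add: mult_ac)
qed

lemma not_well_distributed_imp_deviation:
  assumes "a \<le> n" and "\<delta> \<le> \<epsilon> / 2"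
    and close: "real n ^ a / real (card (oriented_edges a n)) \<le> 1 + \<epsilon> / 2"
    and H: "H \<in> oriented_hypergraphs a n m" "\<not> well_distributed a b n m \<epsilon> H"
  obtains C s where "C \<in> {1..n} \<rightarrow>\<^sub>E {1..b}" "length s = a" "set s \<subseteq> {1..b}"
    "\<delta> * m < \<bar>real (edges_with_colors H C s) - real (card {e\<in>oriented_edges a n. map C e = s})
                  / real (card (oriented_edges a n)) * m\<bar>"
proof -
  define V where "V = oriented_edges a n"
  define p where "p C s = (\<Prod>i<a. real (color_count n C (s ! i)) / real n)" for C s
  have HV: "H \<subseteq> V" using H unfolding V_def oriented_hypergraphs_def by auto
  from H obtain C s where C: "\<forall>v\<in>{1..n}. C v \<in> {1..b}" and s: "length s = a" "set s \<subseteq> {1..b}"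
    and dev: "\<epsilon> * m < \<bar>real (edges_with_colors H C s) - p C s * m\<bar>"
    unfolding well_distributed_def Let_def p_def by (auto simp: algebra_simps)
  define q where "q = real (card {e\<in>V. map C e = s}) / real (card V)"
  \<comment> \<open>Restricting C to [n] changes no count but lands in the finite set of extensional colourings.\<close>
  define C' where "C' = restrict C {1..n}"
  have map_C': "map C' e = map C e" if "e \<in> V" for e
    using that unfolding C'_def V_def oriented_edges_def by (intro map_cong) auto
  have "\<bar>p C s - q\<bar> \<le> \<epsilon> / 2"
    using color_density_close[OF assms(1) s(1), of C] close unfolding p_def q_def V_def by linarith
  then have "\<bar>p C s - q\<bar> * m \<le> \<epsilon> / 2 * m" by (rule mult_right_mono) simp
  then have "\<bar>p C s * m - q * m\<bar> \<le> \<epsilon> / 2 * m"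
    by (simp add: abs_mult flip: left_diff_distrib)
  then have "\<delta> * m < \<bar>real (edges_with_colors H C s) - q * m\<bar>"
    using dev mult_right_mono[OF assms(2), of "real m"] by linarith
  moreover have "edges_with_colors H C' s = edges_with_colors H C s"
    unfolding edges_with_colors_def using HV map_C' by (intro arg_cong[where f=card]) auto
  moreover have "{e\<in>V. map C' e = s} = {e\<in>V. map C e = s}" using map_C' by auto
  moreover have "C' \<in> {1..n} \<rightarrow>\<^sub>E {1..b}" unfolding C'_def using C by auto
  ultimately show ?thesis using that s unfolding q_def V_def by simp
qed

lemma card_not_well_distributed_le:
  assumes "a \<le> n" and \<delta>: "0 < \<delta>" "\<delta> \<le> 1" "\<delta> \<le> \<epsilon> / 2"
    and close: "real n ^ a / real (card (oriented_edges a n)) \<le> 1 + \<epsilon> / 2"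
  shows "real (card {H \<in> oriented_hypergraphs a n m. \<not> well_distributed a b n m \<epsilon> H})
       \<le> 2 * real b ^ a * (real b ^ n * exp (- (\<delta>\<^sup>2 / 8) * m)) * card (oriented_hypergraphs a n m)"
proof -
  define V where "V = oriented_edges a n"
  define F where "F = oriented_hypergraphs a n m"
  define Cs where "Cs = {1..n} \<rightarrow>\<^sub>E {1..b}"
  define Ss where "Ss = {s. set s \<subseteq> {1..b} \<and> length s = a}"
  define T where "T C s = {H \<in> F. \<delta> * m < \<bar>real (edges_with_colors H C s)
              - real (card {e\<in>V. map C e = s}) / real (card V) * m\<bar>}" for C s
  have fCs: "finite Cs" unfolding Cs_def by (simp add: finite_PiE)
  have fSs: "finite Ss" unfolding Ss_def by (simp add: finite_lists_length_eq)
  have fF: "finite F"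
    unfolding F_def oriented_hypergraphs_eq_transversals by (intro finite_transversals finite_oriented_edges)
  have bad: "{H \<in> F. \<not> well_distributed a b n m \<epsilon> H} \<subseteq> (\<Union>C\<in>Cs. \<Union>s\<in>Ss. T C s)"
  proof
    fix H assume "H \<in> {H \<in> F. \<not> well_distributed a b n m \<epsilon> H}"
    then have H: "H \<in> oriented_hypergraphs a n m" "\<not> well_distributed a b n m \<epsilon> H"
      unfolding F_def by auto
    then obtain C s where "C \<in> Cs" "length s = a" "set s \<subseteq> {1..b}"
      "\<delta> * m < \<bar>real (edges_with_colors H C s) - real (card {e\<in>V. map C e = s}) / real (card V) * m\<bar>"
      unfolding Cs_def V_def by (rule not_well_distributed_imp_deviation[OF assms(1) \<delta>(3) close])
    then show "H \<in> (\<Union>C\<in>Cs. \<Union>s\<in>Ss. T C s)" using H unfolding Ss_def T_def F_def by blast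
  qed
  have "finite (\<Union>C\<in>Cs. \<Union>s\<in>Ss. T C s)" using fF by (rule finite_subset[rotated]) (auto simp: T_def)
  then have "card {H \<in> F. \<not> well_distributed a b n m \<epsilon> H} \<le> card (\<Union>C\<in>Cs. \<Union>s\<in>Ss. T C s)"
    using bad by (rule card_mono)
  also have "\<dots> \<le> (\<Sum>C\<in>Cs. card (\<Union>s\<in>Ss. T C s))" by (rule card_UN_le[OF fCs])
  also have "\<dots> \<le> (\<Sum>C\<in>Cs. \<Sum>s\<in>Ss. card (T C s))" by (intro sum_mono card_UN_le[OF fSs])
  finally have "real (card {H \<in> F. \<not> well_distributed a b n m \<epsilon> H})
      \<le> (\<Sum>C\<in>Cs. \<Sum>s\<in>Ss. real (card (T C s)))"
    by (simp only: of_nat_le_iff of_nat_sum[symmetric])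
  also have "\<dots> \<le> (\<Sum>C\<in>Cs. \<Sum>s\<in>Ss. 2 * exp (- (\<delta>\<^sup>2 / 8) * m) * card F)"
    unfolding T_def V_def F_def
    by (intro sum_mono card_deviating_hypergraphs_le[OF assms(1) \<delta>(1,2)])
  also have "\<dots> = real b ^ n * real b ^ a * (2 * exp (- (\<delta>\<^sup>2 / 8) * m) * card F)"
    by (simp add: Cs_def Ss_def card_PiE card_lists_length_eq)
  finally show ?thesis unfolding F_def by (simp add: algebra_simps)
qed

lemma power_mult_exp_tendsto_0:
  fixes m :: "nat \<Rightarrow> nat" and B k :: real
  assumes lim: "filterlim (\<lambda>n. real (m n) / real n) at_top sequentially"
    and "B > 0" "k > 0"
  shows "((\<lambda>n. B ^ n * exp (- k * m n)) \<longlongrightarrow> 0) sequentially"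
proof -
  have "filterlim (\<lambda>n. - ln B + k * (real (m n) / real n)) at_top sequentially"
    using assms by (intro filterlim_tendsto_add_at_top tendsto_const
        filterlim_tendsto_pos_mult_at_top[OF tendsto_const]) auto
  then have "filterlim (\<lambda>n. real n * (- ln B + k * (real (m n) / real n))) at_top sequentially"
    by (intro filterlim_at_top_mult_at_top filterlim_real_sequentially)
  then have "((\<lambda>n. exp (- (real n * (- ln B + k * (real (m n) / real n))))) \<longlongrightarrow> 0) sequentially"
    by (intro filterlim_compose[OF exp_at_bot] filterlim_compose[OF filterlim_uminus_at_bot_at_top])
  moreover have "eventually (\<lambda>n. exp (- (real n * (- ln B + k * (real (m n) / real n))))
                    = B ^ n * exp (- k * m n)) sequentially"
    using eventually_gt_at_top[of 0]
    by eventually_elim (use \<open>B > 0\<close> in \<open>simp add: exp_add exp_diff exp_of_nat_mult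
        algebra_simps exp_minus divide_inverse\<close>)
  ultimately show ?thesis by (rule Lim_transform_eventually)
qed

theorem lemma13:
  fixes a b :: nat and \<epsilon> :: real and m :: "nat \<Rightarrow> nat"
  assumes "a \<ge> 2" and "b \<ge> 2" and "\<epsilon> > 0"
    and "filterlim (\<lambda>n. real (m n) / real n) at_top sequentially"
  shows "(\<lambda>n. real (card {H \<in> oriented_hypergraphs a n (m n).
                     \<not> well_distributed a b n (m n) \<epsilon> H}))
         \<in> o(\<lambda>n. real (card (oriented_hypergraphs a n (m n))))"
proof (rule landau_o.smallI)
  fix c :: real assume "c > 0"
  define \<delta> where "\<delta> = min (\<epsilon> / 2) 1"
  have \<delta>: "0 < \<delta>" "\<delta> \<le> 1" "\<delta> \<le> \<epsilon> / 2" using assms(3) by (auto simp: \<delta>_def)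
  have "((\<lambda>n. 2 * real b ^ a * (real b ^ n * exp (- (\<delta>\<^sup>2 / 8) * m n))) \<longlongrightarrow> 0) sequentially"
    using assms(2,4) \<delta> by (intro tendsto_mult_right_zero power_mult_exp_tendsto_0) auto
  then have small: "eventually (\<lambda>n. 2 * real b ^ a * (real b ^ n * exp (- (\<delta>\<^sup>2 / 8) * m n)) < c) sequentially"
    using \<open>c > 0\<close> by (rule order_tendstoD)
  have close: "eventually (\<lambda>n. real n ^ a / real (card (oriented_edges a n)) \<le> 1 + \<epsilon> / 2) sequentially"
    using assms(3) by (intro eventually_power_div_card_oriented_edges_le) auto
  show "eventually (\<lambda>n. norm (real (card {H \<in> oriented_hypergraphs a n (m n).
                     \<not> well_distributed a b n (m n) \<epsilon> H}))
          \<le> c * norm (real (card (oriented_hypergraphs a n (m n))))) sequentially"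
    using eventually_ge_at_top[of a] close small
  proof eventually_elim
    case (elim n)
    then show ?case
      using card_not_well_distributed_le[OF elim(1) \<delta> elim(2), where b=b and m="m n"]
        mult_right_mono[OF less_imp_le[OF elim(3)], of "real (card (oriented_hypergraphs a n (m n)))"]
      by simp
  qed
qed

end
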